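(* Let $n$ be a positive integer and let $\lambda$ and $\mu$ be integer partitions of $n$. If $\lambda_1 = \mu_1$ and $\mathrm{pre}_2(\lambda) = \mathrm{pre}_2(\mu)$, then $\lambda = \mu$.
   Context: An integer partition $\lambda = (\lambda_1, \dots, \lambda_\ell)$ of a positive integer $n$ is a weakly decreasing finite sequence of positive integers whose sum is $n$; the $\lambda_i$ are its parts and $\ell(\lambda)=\ell$ is its length. For a partition $\lambda = (\lambda_1,\dots,\lambda_\ell)$, $\mathrm{pre}_2(\lambda)$ denotes the partition whose multiset of parts is the multiset $\{\!\{\lambda_i\lambda_j : 1 \le i < j \le \ell\}\!\}$ (with multiplicities, arranged in weakly decreasing order); if $\ell < 2$ it is the empty partition. *)

theory Defs
  imports Main "HOL-Library.Multiset"
begin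

definition is_partition :: "nat \<Rightarrow> nat list \<Rightarrow> bool" where
  "is_partition n lam \<longleftrightarrow> sorted_wrt (\<ge>) lam \<and> (\<forall>x\<in>set lam. 0 < x) \<and> sum_list lam = n"

text \<open>pre_2: multiset of pairwise products lam_i * lam_j over index pairs i < j.
  Since a partition is determined by its multiset of parts, we represent pre_2 as that multiset.\<close>
definition pre2 :: "nat list \<Rightarrow> nat multiset" where
  "pre2 lam = image_mset (\<lambda>(i, j). lam ! i * lam ! j)
     (mset_set {(i, j). i < j \<and> j < length lam})"

end

theory Submission
  imports Defs
begin

text \<open>Suppose the first \<open>k \<ge> 1\<close> parts of \<open>\<lambda>\<close> and \<open>\<mu>\<close> agree. Then the products
  \<open>\<lambda>\<^sub>i\<lambda>\<^sub>j\<close> with \<open>j < k\<close> coincide with the corresponding products for \<open>\<mu>\<close>; removing them from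
  \<open>pre\<^sub>2\<close> leaves the products with \<open>j \<ge> k\<close>, whose largest element is \<open>\<lambda>\<^sub>1\<lambda>\<^sub>k\<^sub>+\<^sub>1\<close> because the
  parts decrease. As \<open>\<lambda>\<^sub>1 = \<mu>\<^sub>1\<close>, this determines the next part, and the number of parts is
  determined by the size of \<open>pre\<^sub>2\<close>.\<close>

definition index_pairs :: "nat \<Rightarrow> (nat \<times> nat) set" where
  "index_pairs m = {(i, j). i < j \<and> j < m}"

definition index_pairs_from :: "nat \<Rightarrow> nat \<Rightarrow> (nat \<times> nat) set" where
  "index_pairs_from m k = {(i, j). i < j \<and> j < m \<and> k \<le> j}"

definition pair_prod :: "nat list \<Rightarrow> nat \<times> nat \<Rightarrow> nat" where
  "pair_prod l = (\<lambda>(i, j). l ! i * l ! j)"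

lemma pre2_conv_pair_prod: "pre2 l = image_mset (pair_prod l) (mset_set (index_pairs (length l)))"
  by (simp add: pre2_def index_pairs_def pair_prod_def)

lemma finite_index_pairs: "finite (index_pairs m)"
  by (rule finite_subset[of _ "{..<m} \<times> {..<m}"]) (auto simp: index_pairs_def)

lemma finite_index_pairs_from: "finite (index_pairs_from m k)"
  by (rule finite_subset[OF _ finite_index_pairs[of m]])
    (auto simp: index_pairs_from_def index_pairs_def)

lemma card_index_pairs_strict_mono:
  assumes "0 < m" "m < m'"
  shows "card (index_pairs m) < card (index_pairs m')"
proof (rule psubset_card_mono[OF finite_index_pairs])
  have "(0, m) \<in> index_pairs m' - index_pairs m"
    using assms by (auto simp: index_pairs_def)
  moreover have "index_pairs m \<subseteq> index_pairs m'"
    using assms by (auto simp: index_pairs_def)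
  ultimately show "index_pairs m \<subset> index_pairs m'" by blast
qed

lemma length_eq_if_pre2_eq:
  assumes "pre2 l = pre2 l'" "l \<noteq> []" "l' \<noteq> []"
  shows "length l = length l'"
proof -
  have "card (index_pairs (length l)) = card (index_pairs (length l'))"
    using arg_cong[OF assms(1), of size] by (simp add: pre2_conv_pair_prod)
  then show ?thesis
    using card_index_pairs_strict_mono assms(2,3)
    by (metis length_greater_0_conv less_irrefl linorder_neqE_nat)
qed

lemma pre2_split:
  assumes "k \<le> length l"
  shows "pre2 l = image_mset (pair_prod l) (mset_set (index_pairs k))
                + image_mset (pair_prod l) (mset_set (index_pairs_from (length l) k))"
proof -
  have "index_pairs (length l) = index_pairs k \<union> index_pairs_from (length l) k"
       "index_pairs k \<inter> index_pairs_from (length l) k = {}"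
    using assms by (auto simp: index_pairs_def index_pairs_from_def)
  then show ?thesis
    by (simp add: pre2_conv_pair_prod mset_set_Union finite_index_pairs finite_index_pairs_from)
qed

lemma Max_pair_prod_index_pairs_from:
  assumes "sorted_wrt (\<ge>) l" "0 < k" "k < length l"
  shows "Max (pair_prod l ` index_pairs_from (length l) k) = l ! 0 * l ! k"
proof (rule Max_eqI)
  show "finite (pair_prod l ` index_pairs_from (length l) k)"
    using finite_index_pairs_from by simp
  show "l ! 0 * l ! k \<in> pair_prod l ` index_pairs_from (length l) k"
    using assms by (force simp: index_pairs_from_def pair_prod_def)
  fix y assume "y \<in> pair_prod l ` index_pairs_from (length l) k"
  then obtain i j where ij: "i < j" "j < length l" "k \<le> j" and y: "y = l ! i * l ! j"
    by (auto simp: index_pairs_from_def pair_prod_def)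
  have "l ! i \<le> l ! 0"
    using assms(1) ij by (cases "i = 0") (auto simp: sorted_wrt_iff_nth_less)
  moreover have "l ! j \<le> l ! k"
    using assms(1) ij by (cases "j = k") (auto simp: sorted_wrt_iff_nth_less)
  ultimately show "y \<le> l ! 0 * l ! k"
    unfolding y by (rule mult_le_mono)
qed

lemma pre2_determines_next_part:
  assumes sorted: "sorted_wrt (\<ge>) l" "sorted_wrt (\<ge>) l'"
    and len: "length l = length l'" and pre2: "pre2 l = pre2 l'"
    and k: "0 < k" "k < length l"
    and prefix: "\<forall>i<k. l ! i = l' ! i"
  shows "l ! k = l' ! k"
proof -
  let ?low = "mset_set (index_pairs k)" and ?high = "mset_set (index_pairs_from (length l) k)"
  have "image_mset (pair_prod l) ?low = image_mset (pair_prod l') ?low"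
    using prefix finite_index_pairs[of k]
    by (intro image_mset_cong) (auto simp: index_pairs_def pair_prod_def)
  moreover have "image_mset (pair_prod l) ?low + image_mset (pair_prod l) ?high
      = image_mset (pair_prod l') ?low + image_mset (pair_prod l') ?high"
    using pre2_split[of k l] pre2_split[of k l'] pre2 k len by (metis less_imp_le)
  ultimately have "image_mset (pair_prod l) ?high = image_mset (pair_prod l') ?high"
    by simp
  then have "pair_prod l ` index_pairs_from (length l) k = pair_prod l' ` index_pairs_from (length l) k"
    by (metis finite_index_pairs_from finite_set_mset_mset_set set_image_mset)
  then have prod_eq: "l ! 0 * l ! k = l' ! 0 * l' ! k"
    using Max_pair_prod_index_pairs_from[OF sorted(1) k]
      Max_pair_prod_index_pairs_from[OF sorted(2) k[unfolded len]] len by simp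
  have head_eq: "l ! 0 = l' ! 0"
    using prefix k by simp
  show ?thesis
  proof (cases "l ! 0 = 0")
    case True
    have "l ! k \<le> l ! 0" "l' ! k \<le> l' ! 0"
      using sorted k len by (auto simp: sorted_wrt_iff_nth_less)
    then show ?thesis using True head_eq by simp
  next
    case False
    then show ?thesis using prod_eq head_eq by simp
  qed
qed

lemma sorted_eq_if_pre2_eq:
  assumes sorted: "sorted_wrt (\<ge>) l" "sorted_wrt (\<ge>) l'"
    and nonempty: "l \<noteq> []" "l' \<noteq> []"
    and hd: "hd l = hd l'" and pre2: "pre2 l = pre2 l'"
  shows "l = l'"
proof -
  have len: "length l = length l'"
    using length_eq_if_pre2_eq[OF pre2 nonempty] .
  have "\<forall>i<k. l ! i = l' ! i" if "k \<le> length l" for k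
    using that
  proof (induction k)
    case 0
    then show ?case by simp
  next
    case (Suc k)
    have "l ! k = l' ! k"
    proof (cases "k = 0")
      case True
      then show ?thesis using hd nonempty by (simp add: hd_conv_nth)
    next
      case False
      then show ?thesis
        using pre2_determines_next_part[OF sorted len pre2] Suc by simp
    qed
    with Suc show ?case by (simp add: less_Suc_eq)
  qed
  from this[of "length l"] len show ?thesis
    by (intro nth_equalityI) auto
qed

theorem lemma2:
  fixes n :: nat and lam mu :: "nat list"
  assumes "0 < n"
    and "is_partition n lam" and "is_partition n mu"
    and "hd lam = hd mu"
    and "pre2 lam = pre2 mu"
  shows "lam = mu"
proof (rule sorted_eq_if_pre2_eq)
  show "sorted_wrt (\<ge>) lam" "sorted_wrt (\<ge>) mu"
    using assms(2,3) by (simp_all add: is_partition_def)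
  show "lam \<noteq> []"
    using assms(1,2) by (auto simp: is_partition_def)
  show "mu \<noteq> []"
    using assms(1,3) by (auto simp: is_partition_def)
qed (use assms(4,5) in auto)

end
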